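(* Let $\mathbf{\Pi}=\langle\mathit{PF},\Pi\rangle$ be a multi-valued probabilistic program such that every probability $p_i$ in the declaration of every probabilistic constant is positive. If $\mathrm{SM}''[\mathbf{\Pi}]$ is not empty, then for every interpretation $I$, $P''_{\mathbf{\Pi}}(I)=P_{T(\mathbf{\Pi})}(I)$.
   Context: Stable model semantics: a formula is negative if every atom occurrence is in the scope of negation; a rule has the form $A\leftarrow B\wedge N$ ($A$ a possibly empty disjunction of atoms, $B$ a conjunction of atoms, $N$ a negative formula); the reduct $\Pi^I$ of a ground program consists of $A\leftarrow B$ for rules with $I\models N$, and $I$ (a set of atoms) is a stable model if it is a minimal model of $\Pi^I$. An $\mathrm{LP}^{\mathrm{MLN}}$ program is a finite set of weighted rules $w:R$ ($w$ real or the symbol $\alpha$); $\Pi_I=\{w:R\mid I\models R\}$; $\mathrm{SM}[\Pi]=\{I\mid I$ stable model of the unweighted $\Pi_I\}$; $W_\Pi(I)=\exp(\sum_{w:R\in\Pi_I}w)$ if $I\in\mathrm{SM}[\Pi]$, else $0$; $P_\Pi(I)=\lim_{\alpha\to\infty}W_\Pi(I)/\sum_{J\in\mathrm{SM}[\Pi]}W_\Pi(J)$. Multi-valued signature: a finite set of constants $c$, each with a finite domain $\mathrm{Dom}(c)$; the propositional atoms are $c=v$ for $v\in\mathrm{Dom}(c)$ ("=" is part of the symbol). Constants are divided into probabilistic and regular. A multi-valued probabilistic program $\mathbf{\Pi}=\langle\mathit{PF},\Pi\rangle$: $\mathit{PF}$ contains, for each probabilistic constant $c$, one declaration $p_1:c=v_1\mid\dots\mid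 p_n:c=v_n$ with $\{v_1,\dots,v_n\}=\mathrm{Dom}(c)$ distinct, $0\le p_i\le1$, $\sum_i p_i=1$; write $M_{\mathbf{\Pi}}(c=v_i)=p_i$. $\Pi$ is a set of rules whose heads contain no atom of a probabilistic constant. $T(\mathbf{\Pi})$ is the $\mathrm{LP}^{\mathrm{MLN}}$ program containing: for each declaration and each $i$, $\ln(p_i):c=v_i$ if $0<p_i<1$, $\alpha:c=v_i$ if $p_i=1$, $\alpha:\bot\leftarrow c=v_i$ if $p_i=0$; $\alpha:R$ for each $R\in\Pi$; $\alpha:\bot\leftarrow c=v_1\wedge c=v_2$ for every constant $c$ and distinct $v_1,v_2\in\mathrm{Dom}(c)$; and $\alpha:\bot\leftarrow\neg\bigvee_{v\in\mathrm{Dom}(c)}c=v$ for every probabilistic constant $c$. An interpretation is consistent if it satisfies the last two kinds of constraints. For consistent $I$, $\mathit{TC}(I)=\{c=v\in I\mid c$ probabilistic$\}$. $\mathrm{SM}''[\mathbf{\Pi}]$ is the set of consistent $I$ that are stable models of $\Pi\cup\mathit{TC}(I)$. $W''_{\mathbf{\Pi}}(I)=\prod_{c=v\in\mathit{TC}(I)}M_{\mathbf{\Pi}}(c=v)$ if $I\in\mathrm{SM}''[\mathbf{\Pi}]$, else $0$; $P''_{\mathbf{\Pi}}(I)=W''_{\mathbf{\Pi}}(I)/\sum_{J\in\mathrm{SM}''[\mathbf{\Pi}]}W''_{\mathbf{\Pi}}(J)$. *)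

theory Defs
  imports Complex_Main
begin

datatype 'a formula =
    FAtom 'a | FBot | FTop | FNot "'a formula"
  | FAnd "'a formula" "'a formula" | FOr "'a formula" "'a formula"
  | FImp "'a formula" "'a formula"

fun fsat :: "'a set \<Rightarrow> 'a formula \<Rightarrow> bool" where
  "fsat I (FAtom a) = (a \<in> I)"
| "fsat I FBot = False"
| "fsat I FTop = True"
| "fsat I (FNot f) = (\<not> fsat I f)"
| "fsat I (FAnd f g) = (fsat I f \<and> fsat I g)"
| "fsat I (FOr f g) = (fsat I f \<or> fsat I g)"
| "fsat I (FImp f g) = (fsat I f \<longrightarrow> fsat I g)"

fun fatoms :: "'a formula \<Rightarrow> 'a set" where
  "fatoms (FAtom a) = {a}"
| "fatoms FBot = {}"
| "fatoms FTop = {}"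
| "fatoms (FNot f) = fatoms f"
| "fatoms (FAnd f g) = fatoms f \<union> fatoms g"
| "fatoms (FOr f g) = fatoms f \<union> fatoms g"
| "fatoms (FImp f g) = fatoms f \<union> fatoms g"

fun negative :: "'a formula \<Rightarrow> bool" where
  "negative (FAtom a) = False"
| "negative FBot = True"
| "negative FTop = True"
| "negative (FNot f) = True"
| "negative (FAnd f g) = (negative f \<and> negative g)"
| "negative (FOr f g) = (negative f \<and> negative g)"
| "negative (FImp f g) = (negative f \<and> negative g)"

definition disj_list :: "'a formula list \<Rightarrow> 'a formula" where
  "disj_list fs = foldr FOr fs FBot"

text \<open>Rule  A <- B /\ N : head A (disjunction of atoms, empty = bottom),
  positive body B (conjunction of atoms), negative formula N.\<close>
datatype 'a rule = Rule (head: "'a set") (pos: "'a set") (neg: "'a formula")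

definition rule_sat :: "'a set \<Rightarrow> 'a rule \<Rightarrow> bool" where
  "rule_sat I R \<longleftrightarrow> (pos R \<subseteq> I \<and> fsat I (neg R) \<longrightarrow> head R \<inter> I \<noteq> {})"

definition rule_atoms :: "'a rule \<Rightarrow> 'a set" where
  "rule_atoms R = head R \<union> pos R \<union> fatoms (neg R)"

definition well_formed_rule :: "'a rule \<Rightarrow> bool" where
  "well_formed_rule R \<longleftrightarrow> finite (head R) \<and> finite (pos R) \<and> negative (neg R)"

definition reduct :: "'a rule set \<Rightarrow> 'a set \<Rightarrow> ('a set \<times> 'a set) set" where
  "reduct P I = {(head R, pos R) | R. R \<in> P \<and> fsat I (neg R)}"

definition pos_model :: "'a set \<Rightarrow> ('a set \<times> 'a set) set \<Rightarrow> bool" where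
  "pos_model J Q \<longleftrightarrow> (\<forall>(A, B) \<in> Q. B \<subseteq> J \<longrightarrow> A \<inter> J \<noteq> {})"

definition stable_model :: "'a set \<Rightarrow> 'a rule set \<Rightarrow> bool" where
  "stable_model I P \<longleftrightarrow> pos_model I (reduct P I) \<and>
     (\<forall>J. J \<subset> I \<longrightarrow> \<not> pos_model J (reduct P I))"

datatype weight = W real | Alpha

fun wval :: "real \<Rightarrow> weight \<Rightarrow> real" where
  "wval \<alpha> (W r) = r"
| "wval \<alpha> Alpha = \<alpha>"

definition sat_part :: "(weight \<times> 'a rule) set \<Rightarrow> 'a set \<Rightarrow> (weight \<times> 'a rule) set" where
  "sat_part \<Pi> I = {(w, R) \<in> \<Pi>. rule_sat I R}"

definition lpmln_SM :: "'a set \<Rightarrow> (weight \<times> 'a rule) set \<Rightarrow> 'a set set" where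
  "lpmln_SM At \<Pi> = {I. I \<subseteq> At \<and> stable_model I (snd ` sat_part \<Pi> I)}"

definition lpmln_W :: "'a set \<Rightarrow> (weight \<times> 'a rule) set \<Rightarrow> real \<Rightarrow> 'a set \<Rightarrow> real" where
  "lpmln_W At \<Pi> \<alpha> I =
     (if I \<in> lpmln_SM At \<Pi> then exp (\<Sum>(w, R) \<in> sat_part \<Pi> I. wval \<alpha> w) else 0)"

definition lpmln_ratio :: "'a set \<Rightarrow> (weight \<times> 'a rule) set \<Rightarrow> real \<Rightarrow> 'a set \<Rightarrow> real" where
  "lpmln_ratio At \<Pi> \<alpha> I = lpmln_W At \<Pi> \<alpha> I / (\<Sum>J \<in> lpmln_SM At \<Pi>. lpmln_W At \<Pi> \<alpha> J)"

definition lpmln_prob :: "'a set \<Rightarrow> (weight \<times> 'a rule) set \<Rightarrow> 'a set \<Rightarrow> real" where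
  "lpmln_prob At \<Pi> I = Lim at_top (\<lambda>\<alpha>. lpmln_ratio At \<Pi> \<alpha> I)"

text \<open>Signature: constants C (finite), domains Dom c; atoms are pairs (c,v) standing
  for c=v. PC \<subseteq> C are the probabilistic constants; M c v is the probability p_i
  attached to c=v in the declaration of c; Pi is the set of rules.\<close>

definition sig_atoms :: "'c set \<Rightarrow> ('c \<Rightarrow> 'v set) \<Rightarrow> ('c \<times> 'v) set" where
  "sig_atoms C Dom = {(c, v). c \<in> C \<and> v \<in> Dom c}"

definition mv_program ::
  "'c set \<Rightarrow> 'c set \<Rightarrow> ('c \<Rightarrow> 'v set) \<Rightarrow> ('c \<Rightarrow> 'v \<Rightarrow> real) \<Rightarrow> ('c \<times> 'v) rule set \<Rightarrow> bool" where
  "mv_program C PC Dom M \<Pi> \<longleftrightarrow>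
     finite C \<and> PC \<subseteq> C \<and> (\<forall>c \<in> C. finite (Dom c)) \<and>
     (\<forall>c \<in> PC. (\<forall>v \<in> Dom c. 0 \<le> M c v \<and> M c v \<le> 1) \<and> (\<Sum>v \<in> Dom c. M c v) = 1) \<and>
     finite \<Pi> \<and>
     (\<forall>R \<in> \<Pi>. well_formed_rule R \<and> rule_atoms R \<subseteq> sig_atoms C Dom \<and>
                (\<forall>(c, v) \<in> head R. c \<notin> PC))"

definition fact :: "'a \<Rightarrow> 'a rule" where
  "fact a = Rule {a} {} FTop"

definition dom_list :: "('c \<Rightarrow> 'v set) \<Rightarrow> 'c \<Rightarrow> 'v list" where
  "dom_list Dom c = (SOME xs. distinct xs \<and> set xs = Dom c)"

definition T_prog ::
  "'c set \<Rightarrow> 'c set \<Rightarrow> ('c \<Rightarrow> 'v set) \<Rightarrow> ('c \<Rightarrow> 'v \<Rightarrow> real) \<Rightarrow> ('c \<times> 'v) rule set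
   \<Rightarrow> (weight \<times> ('c \<times> 'v) rule) set" where
  "T_prog C PC Dom M \<Pi> =
     {(W (ln (M c v)), fact (c, v)) | c v. c \<in> PC \<and> v \<in> Dom c \<and> 0 < M c v \<and> M c v < 1}
   \<union> {(Alpha, fact (c, v)) | c v. c \<in> PC \<and> v \<in> Dom c \<and> M c v = 1}
   \<union> {(Alpha, Rule {} {(c, v)} FTop) | c v. c \<in> PC \<and> v \<in> Dom c \<and> M c v = 0}
   \<union> {(Alpha, R) | R. R \<in> \<Pi>}
   \<union> {(Alpha, Rule {} {(c, v1), (c, v2)} FTop) | c v1 v2.
        c \<in> C \<and> v1 \<in> Dom c \<and> v2 \<in> Dom c \<and> v1 \<noteq> v2}
   \<union> {(Alpha, Rule {} {} (FNot (disj_list (map (\<lambda>v. FAtom (c, v)) (dom_list Dom c))))) | c.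
        c \<in> PC}"

definition consistent :: "'c set \<Rightarrow> 'c set \<Rightarrow> ('c \<Rightarrow> 'v set) \<Rightarrow> ('c \<times> 'v) set \<Rightarrow> bool" where
  "consistent C PC Dom I \<longleftrightarrow>
     (\<forall>c \<in> C. \<forall>v1 \<in> Dom c. \<forall>v2 \<in> Dom c. v1 \<noteq> v2 \<longrightarrow> \<not> ((c, v1) \<in> I \<and> (c, v2) \<in> I)) \<and>
     (\<forall>c \<in> PC. \<exists>v \<in> Dom c. (c, v) \<in> I)"

definition TC :: "'c set \<Rightarrow> ('c \<times> 'v) set \<Rightarrow> ('c \<times> 'v) set" where
  "TC PC I = {(c, v) \<in> I. c \<in> PC}"

definition SM2 ::
  "'c set \<Rightarrow> 'c set \<Rightarrow> ('c \<Rightarrow> 'v set) \<Rightarrow> ('c \<times> 'v) rule set \<Rightarrow> ('c \<times> 'v) set set" where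
  "SM2 C PC Dom \<Pi> = {I. I \<subseteq> sig_atoms C Dom \<and> consistent C PC Dom I \<and>
                         stable_model I (\<Pi> \<union> fact ` TC PC I)}"

definition W2 ::
  "'c set \<Rightarrow> 'c set \<Rightarrow> ('c \<Rightarrow> 'v set) \<Rightarrow> ('c \<Rightarrow> 'v \<Rightarrow> real) \<Rightarrow> ('c \<times> 'v) rule set
   \<Rightarrow> ('c \<times> 'v) set \<Rightarrow> real" where
  "W2 C PC Dom M \<Pi> I =
     (if I \<in> SM2 C PC Dom \<Pi> then (\<Prod>(c, v) \<in> TC PC I. M c v) else 0)"

definition P2 ::
  "'c set \<Rightarrow> 'c set \<Rightarrow> ('c \<Rightarrow> 'v set) \<Rightarrow> ('c \<Rightarrow> 'v \<Rightarrow> real) \<Rightarrow> ('c \<times> 'v) rule set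
   \<Rightarrow> ('c \<times> 'v) set \<Rightarrow> real" where
  "P2 C PC Dom M \<Pi> I = W2 C PC Dom M \<Pi> I / (\<Sum>J \<in> SM2 C PC Dom \<Pi>. W2 C PC Dom M \<Pi> J)"

end

theory Submission
  imports Defs
begin

text \<open>The weight of an interpretation \<open>J\<close> under \<open>T(\<Pi>)\<close> is \<open>exp (\<alpha> * k J + g J)\<close>, where
  \<open>k J\<close> counts the satisfied \<open>\<alpha>\<close>-rules and \<open>g J\<close> is the sum of \<open>ln p\<close> over the
  probabilistic atoms of \<open>J\<close> of probability \<open>p < 1\<close>. As \<open>\<alpha> \<rightarrow> \<infinity>\<close>, the normalised weights
  concentrate on the stable models of \<open>T(\<Pi>)\<close> satisfying all \<open>\<alpha>\<close>-rules, with weights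
  proportional to \<open>exp (g J) = W''(J)\<close>. These are exactly the members of \<open>SM''[\<Pi>]\<close>: for such
  \<open>J\<close> the satisfied facts of \<open>T(\<Pi>)\<close> are exactly the facts of \<open>TC(J)\<close> (positivity forces every
  atom of probability 1 into a consistent \<open>J\<close>), and the remaining \<open>\<alpha>\<close>-rules are constraints
  satisfied by \<open>J\<close>, which do not affect stability.\<close>

lemma tendsto_exp_affine_at_top_neg:
  fixes c d :: real
  assumes "c < 0"
  shows "((\<lambda>a. exp (a * c + d)) \<longlongrightarrow> 0) at_top"
proof -
  have "filterlim (\<lambda>a. c * a) at_bot at_top"
    using assms by (intro filterlim_cmult_at_bot_at_top[OF filterlim_ident]) auto
  then have "filterlim (\<lambda>a. d + c * a) at_bot at_top"
    using filterlim_tendsto_add_at_bot_iff[OF tendsto_const] by blast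
  then have "filterlim (\<lambda>a. a * c + d) at_bot at_top"
    by (simp add: algebra_simps)
  then show ?thesis
    using exp_at_bot filterlim_compose by blast
qed

lemma tendsto_gibbs_ratio_at_top:
  fixes k g :: "'a \<Rightarrow> real"
  assumes "finite X" and "\<forall>J\<in>X. k J \<le> N" and "\<exists>J\<in>X. k J = N"
  shows "((\<lambda>a. (if I \<in> X then exp (a * k I + g I) else 0) / (\<Sum>J\<in>X. exp (a * k J + g J)))
          \<longlongrightarrow> (if I \<in> {J\<in>X. k J = N} then exp (g I) else 0) / (\<Sum>J | J \<in> X \<and> k J = N. exp (g J)))
         at_top"
proof -
  define Y where "Y = {J\<in>X. k J = N}"
  define e where "e a J = exp (a * (k J - N) + g J)" for a J
  have scale: "exp (a * k J + g J) = exp (a * N) * e a J" for a J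
    unfolding e_def mult_exp_exp by (simp add: algebra_simps)
  have rescale: "(if I \<in> X then exp (a * k I + g I) else 0) / (\<Sum>J\<in>X. exp (a * k J + g J))
      = (if I \<in> X then e a I else 0) / (\<Sum>J\<in>X. e a J)" for a
    unfolding scale sum_distrib_left[symmetric] by simp
  have lim_e: "((\<lambda>a. e a J) \<longlongrightarrow> (if J \<in> Y then exp (g J) else 0)) at_top" if "J \<in> X" for J
  proof (cases "k J = N")
    case False
    with assms(2) that have "k J - N < 0" by force
    then show ?thesis
      using False unfolding e_def Y_def by (simp add: tendsto_exp_affine_at_top_neg)
  qed (simp add: e_def Y_def that)
  have "((\<lambda>a. \<Sum>J\<in>X. e a J) \<longlongrightarrow> (\<Sum>J\<in>X. if J \<in> Y then exp (g J) else 0)) at_top"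
    using lim_e by (intro tendsto_sum) auto
  moreover have "(\<Sum>J\<in>X. if J \<in> Y then exp (g J) else 0) = (\<Sum>J\<in>Y. exp (g J))"
    using assms(1) by (simp add: Y_def sum.inter_filter)
  moreover have "(\<Sum>J\<in>Y. exp (g J)) > 0"
    using assms(1,3) unfolding Y_def by (intro sum_pos) auto
  moreover have "((\<lambda>a. if I \<in> X then e a I else 0) \<longlongrightarrow> (if I \<in> Y then exp (g I) else 0)) at_top"
    using lim_e[of I] by (cases "I \<in> X") (auto simp: Y_def)
  ultimately have "((\<lambda>a. (if I \<in> X then e a I else 0) / (\<Sum>J\<in>X. e a J))
      \<longlongrightarrow> (if I \<in> Y then exp (g I) else 0) / (\<Sum>J\<in>Y. exp (g J))) at_top"
    by (intro tendsto_divide) auto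
  then show ?thesis
    unfolding rescale Y_def .
qed

lemma reduct_Un: "reduct (P \<union> K) I = reduct P I \<union> reduct K I"
  unfolding reduct_def by blast

lemma pos_model_Un: "pos_model J (Q \<union> Q') \<longleftrightarrow> pos_model J Q \<and> pos_model J Q'"
  unfolding pos_model_def by (simp only: ball_Un)

lemma stable_model_rule_sat:
  assumes "stable_model I P" and "R \<in> P"
  shows "rule_sat I R"
proof -
  have "(head R, pos R) \<in> reduct P I" if "fsat I (neg R)"
    using assms(2) that unfolding reduct_def by blast
  then show ?thesis
    using assms(1) unfolding stable_model_def pos_model_def rule_sat_def by auto
qed

text \<open>Constraints satisfied by \<open>I\<close> have no effect on the stability of \<open>I\<close>: in the reduct
  they become rules \<open>\<bottom> \<leftarrow> B\<close> with \<open>B \<not>\<subseteq> I\<close>, which every subset of \<open>I\<close> satisfies.\<close>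
lemma stable_model_Un_constraints:
  assumes "\<forall>R\<in>K. head R = {} \<and> rule_sat I R"
  shows "stable_model I (P \<union> K) \<longleftrightarrow> stable_model I P"
proof -
  have "pos_model J (reduct K I)" if "J \<subseteq> I" for J
    unfolding pos_model_def reduct_def using assms that by (auto simp: rule_sat_def)
  then have "pos_model J (reduct (P \<union> K) I) \<longleftrightarrow> pos_model J (reduct P I)" if "J \<subseteq> I" for J
    using that unfolding reduct_Un pos_model_Un by blast
  then show ?thesis
    unfolding stable_model_def by (simp add: less_imp_le)
qed

lemma rule_sat_fact [simp]: "rule_sat I (fact a) \<longleftrightarrow> a \<in> I"
  unfolding rule_sat_def fact_def by auto

lemma rule_sat_constraint [simp]: "rule_sat I (Rule {} B FTop) \<longleftrightarrow> \<not> B \<subseteq> I"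
  unfolding rule_sat_def by auto

lemma fsat_disj_list [simp]: "fsat I (disj_list fs) \<longleftrightarrow> (\<exists>f\<in>set fs. fsat I f)"
  unfolding disj_list_def by (induction fs) auto

lemma set_dom_list:
  assumes "finite (Dom c)"
  shows "set (dom_list Dom c) = Dom c"
proof -
  have "\<exists>xs. distinct xs \<and> set xs = Dom c"
    using finite_distinct_list[OF assms] by blast
  from someI_ex[OF this] show ?thesis
    unfolding dom_list_def by simp
qed

lemma sat_part_Un: "sat_part (X \<union> Y) I = sat_part X I \<union> sat_part Y I"
  unfolding sat_part_def by blast

lemma sat_part_subset: "sat_part X I \<subseteq> X"
  unfolding sat_part_def by blast

lemma card_sat_part_eq_iff:
  assumes "finite X"
  shows "card (sat_part X I) = card X \<longleftrightarrow> (\<forall>(w, R)\<in>X. rule_sat I R)"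
proof -
  have "card (sat_part X I) = card X \<longleftrightarrow> sat_part X I = X"
    using assms sat_part_subset by (metis card_subset_eq)
  then show ?thesis
    unfolding sat_part_def by auto
qed

locale positive_mv_program =
  fixes C PC :: "'c set" and Dom :: "'c \<Rightarrow> 'v set" and M :: "'c \<Rightarrow> 'v \<Rightarrow> real"
    and \<Pi> :: "('c \<times> 'v) rule set"
  assumes mv_program: "mv_program C PC Dom M \<Pi>"
    and positive: "\<forall>c \<in> PC. \<forall>v \<in> Dom c. 0 < M c v"
begin

abbreviation At :: "('c \<times> 'v) set" where
  "At \<equiv> sig_atoms C Dom"

abbreviation T :: "(weight \<times> ('c \<times> 'v) rule) set" where
  "T \<equiv> T_prog C PC Dom M \<Pi>"

lemma finite_C: "finite C"
  and PC_subset: "PC \<subseteq> C"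
  and finite_Dom: "c \<in> C \<Longrightarrow> finite (Dom c)"
  and M_le_1: "c \<in> PC \<Longrightarrow> v \<in> Dom c \<Longrightarrow> M c v \<le> 1"
  and sum_M: "c \<in> PC \<Longrightarrow> (\<Sum>v\<in>Dom c. M c v) = 1"
  and finite_rules: "finite \<Pi>"
  using mv_program unfolding mv_program_def by auto

lemma finite_At: "finite At"
proof -
  have "At = Sigma C Dom"
    unfolding sig_atoms_def by auto
  then show ?thesis
    using finite_C finite_Dom by auto
qed

definition soft_facts :: "(weight \<times> ('c \<times> 'v) rule) set" where
  "soft_facts = (\<lambda>(c, v). (W (ln (M c v)), fact (c, v))) ` {(c, v) \<in> At. c \<in> PC \<and> M c v < 1}"

definition certain_facts :: "(weight \<times> ('c \<times> 'v) rule) set" where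
  "certain_facts = (\<lambda>a. (Alpha, fact a)) ` {(c, v) \<in> At. c \<in> PC \<and> M c v = 1}"

definition consistency_constraints :: "(weight \<times> ('c \<times> 'v) rule) set" where
  "consistency_constraints =
     {(Alpha, Rule {} {(c, v1), (c, v2)} FTop) | c v1 v2.
        c \<in> C \<and> v1 \<in> Dom c \<and> v2 \<in> Dom c \<and> v1 \<noteq> v2}
   \<union> {(Alpha, Rule {} {} (FNot (disj_list (map (\<lambda>v. FAtom (c, v)) (dom_list Dom c))))) | c.
        c \<in> PC}"

definition hard_rules :: "(weight \<times> ('c \<times> 'v) rule) set" where
  "hard_rules = certain_facts \<union> Pair Alpha ` \<Pi> \<union> consistency_constraints"

lemma T_prog_eq: "T = soft_facts \<union> hard_rules"
proof -
  have zero: "{(Alpha, Rule {} {(c, v)} FTop) | c v. c \<in> PC \<and> v \<in> Dom c \<and> M c v = 0} = {}"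
    using positive by fastforce
  have soft: "{(W (ln (M c v)), fact (c, v)) | c v. c \<in> PC \<and> v \<in> Dom c \<and> 0 < M c v \<and> M c v < 1}
      = soft_facts"
    unfolding soft_facts_def sig_atoms_def using positive PC_subset by (auto simp: image_iff)
  have certain: "{(Alpha, fact (c, v)) | c v. c \<in> PC \<and> v \<in> Dom c \<and> M c v = 1} = certain_facts"
    unfolding certain_facts_def sig_atoms_def using PC_subset by (auto simp: image_iff)
  have program: "{(Alpha, R) | R. R \<in> \<Pi>} = Pair Alpha ` \<Pi>"
    by blast
  show ?thesis
    unfolding T_prog_def zero soft certain program hard_rules_def consistency_constraints_def
    by (simp add: Un_ac)
qed

lemma finite_soft_facts: "finite soft_facts"
  unfolding soft_facts_def by (intro finite_imageI finite_subset[OF _ finite_At]) auto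

lemma finite_hard_rules: "finite hard_rules"
proof -
  have "finite certain_facts"
    unfolding certain_facts_def by (intro finite_imageI finite_subset[OF _ finite_At]) auto
  moreover have "finite {(Alpha, Rule {} {(c, v1), (c, v2)} FTop) | c v1 v2.
      c \<in> C \<and> v1 \<in> Dom c \<and> v2 \<in> Dom c \<and> v1 \<noteq> v2}"
  proof (rule finite_subset)
    show "{(Alpha, Rule {} {(c, v1), (c, v2)} FTop) | c v1 v2.
        c \<in> C \<and> v1 \<in> Dom c \<and> v2 \<in> Dom c \<and> v1 \<noteq> v2}
      \<subseteq> (\<lambda>(a, b). (Alpha, Rule {} {a, b} FTop)) ` (At \<times> At)"
      unfolding sig_atoms_def by force
  qed (use finite_At in simp)
  moreover have "finite PC"
    using finite_C PC_subset by (rule finite_subset[rotated])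
  ultimately show ?thesis
    unfolding hard_rules_def consistency_constraints_def
    using finite_At finite_rules by (auto intro: finite_subset)
qed

lemma rule_sat_existence_constraint:
  assumes "c \<in> PC"
  shows "rule_sat J (Rule {} {} (FNot (disj_list (map (\<lambda>v. FAtom (c, v)) (dom_list Dom c)))))
    \<longleftrightarrow> (\<exists>v\<in>Dom c. (c, v) \<in> J)"
  using set_dom_list[of Dom c] finite_Dom[of c] assms PC_subset by (auto simp: rule_sat_def)

lemma consistent_iff_sat_constraints:
  "consistent C PC Dom J \<longleftrightarrow> (\<forall>(w, R)\<in>consistency_constraints. rule_sat J R)"
proof
  show "consistent C PC Dom J \<Longrightarrow> \<forall>(w, R)\<in>consistency_constraints. rule_sat J R"
    unfolding consistent_def consistency_constraints_def by (auto simp: rule_sat_existence_constraint)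
next
  assume sat: "\<forall>(w, R)\<in>consistency_constraints. rule_sat J R"
  show "consistent C PC Dom J"
    unfolding consistent_def
  proof (intro conjI ballI impI)
    fix c v1 v2 assume "c \<in> C" "v1 \<in> Dom c" "v2 \<in> Dom c" "v1 \<noteq> v2"
    then have "(Alpha, Rule {} {(c, v1), (c, v2)} FTop) \<in> consistency_constraints"
      unfolding consistency_constraints_def by blast
    with sat show "\<not> ((c, v1) \<in> J \<and> (c, v2) \<in> J)"
      by fastforce
  next
    fix c assume c: "c \<in> PC"
    then have "(Alpha, Rule {} {} (FNot (disj_list (map (\<lambda>v. FAtom (c, v)) (dom_list Dom c)))))
        \<in> consistency_constraints"
      unfolding consistency_constraints_def by blast
    with sat show "\<exists>v\<in>Dom c. (c, v) \<in> J"
      using rule_sat_existence_constraint[OF c] by fastforce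
  qed
qed

text \<open>The value taken by \<open>c\<close> in a consistent \<open>J\<close> has positive probability, so it must be the
  value of probability 1.\<close>
lemma consistent_imp_certain_atom:
  assumes "consistent C PC Dom J" and "c \<in> PC" and "v \<in> Dom c" and "M c v = 1"
  shows "(c, v) \<in> J"
proof (rule ccontr)
  assume notin: "(c, v) \<notin> J"
  obtain v' where v': "v' \<in> Dom c" "(c, v') \<in> J"
    using assms(1,2) unfolding consistent_def by blast
  with notin have "v' \<noteq> v" by blast
  have "M c v + M c v' = (\<Sum>x\<in>{v, v'}. M c x)"
    using \<open>v' \<noteq> v\<close> by simp
  also have "\<dots> \<le> (\<Sum>x\<in>Dom c. M c x)"
    using assms(2,3) v'(1) positive PC_subset finite_Dom by (intro sum_mono2) (auto simp: less_imp_le)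
  finally show False
    using assms(2,4) v'(1) positive sum_M by fastforce
qed

lemma sat_hard_rules_iff:
  "(\<forall>(w, R)\<in>hard_rules. rule_sat J R) \<longleftrightarrow> (\<forall>R\<in>\<Pi>. rule_sat J R) \<and> consistent C PC Dom J"
proof -
  have "consistent C PC Dom J \<Longrightarrow> \<forall>(w, R)\<in>certain_facts. rule_sat J R"
    unfolding certain_facts_def sig_atoms_def using consistent_imp_certain_atom by auto
  then show ?thesis
    unfolding hard_rules_def ball_Un consistent_iff_sat_constraints by auto
qed

lemma sat_part_soft_facts:
  assumes "J \<subseteq> At"
  shows "sat_part soft_facts J
    = (\<lambda>(c, v). (W (ln (M c v)), fact (c, v))) ` {(c, v) \<in> TC PC J. M c v < 1}"
  using assms unfolding soft_facts_def sat_part_def TC_def by force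

lemma sat_part_T_prog:
  assumes "J \<subseteq> At" and "\<forall>(w, R)\<in>hard_rules. rule_sat J R"
  shows "snd ` sat_part T J = (\<Pi> \<union> fact ` TC PC J) \<union> snd ` consistency_constraints"
proof -
  have "sat_part hard_rules J = hard_rules"
    using assms(2) unfolding sat_part_def by auto
  then have "snd ` sat_part T J
      = fact ` {(c, v) \<in> TC PC J. M c v < 1} \<union> snd ` certain_facts \<union> \<Pi> \<union> snd ` consistency_constraints"
    unfolding T_prog_eq sat_part_Un hard_rules_def
    by (simp add: sat_part_soft_facts[OF assms(1)] image_Un image_image case_prod_beta Un_ac)
  also have "fact ` {(c, v) \<in> TC PC J. M c v < 1} \<union> snd ` certain_facts = fact ` TC PC J"
  proof -
    have "consistent C PC Dom J"
      using assms(2) sat_hard_rules_iff by blast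
    then have "{(c, v) \<in> At. c \<in> PC \<and> M c v = 1} \<subseteq> J"
      unfolding sig_atoms_def using consistent_imp_certain_atom by blast
    moreover have "M c v \<le> 1" if "(c, v) \<in> TC PC J" for c v
      using that assms(1) M_le_1 unfolding TC_def sig_atoms_def by auto
    ultimately have "{(c, v) \<in> TC PC J. M c v < 1} \<union> {(c, v) \<in> At. c \<in> PC \<and> M c v = 1} = TC PC J"
      using assms(1) unfolding TC_def by fastforce
    then show ?thesis
      unfolding certain_facts_def image_image snd_conv image_Un[symmetric] by simp
  qed
  finally show ?thesis
    by (simp add: Un_ac)
qed

lemma stable_model_T_prog_iff:
  assumes "J \<subseteq> At" and "\<forall>(w, R)\<in>hard_rules. rule_sat J R"
  shows "stable_model J (snd ` sat_part T J) \<longleftrightarrow> stable_model J (\<Pi> \<union> fact ` TC PC J)"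
proof -
  have "\<forall>(w, R)\<in>consistency_constraints. head R = {}"
    unfolding consistency_constraints_def by auto
  moreover have "consistent C PC Dom J"
    using assms(2) sat_hard_rules_iff by blast
  ultimately have "\<forall>R\<in>snd ` consistency_constraints. head R = {} \<and> rule_sat J R"
    unfolding consistent_iff_sat_constraints by fastforce
  then show ?thesis
    unfolding sat_part_T_prog[OF assms] by (rule stable_model_Un_constraints)
qed

lemma SM2_eq_max_hard_rules:
  "SM2 C PC Dom \<Pi> = {J \<in> lpmln_SM At T. card (sat_part hard_rules J) = card hard_rules}"
proof (intro set_eqI iffI)
  fix J
  assume "J \<in> SM2 C PC Dom \<Pi>"
  then have At: "J \<subseteq> At" and "consistent C PC Dom J"
    and stable: "stable_model J (\<Pi> \<union> fact ` TC PC J)"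
    unfolding SM2_def by auto
  then have "\<forall>(w, R)\<in>hard_rules. rule_sat J R"
    using sat_hard_rules_iff stable_model_rule_sat by blast
  then show "J \<in> {J \<in> lpmln_SM At T. card (sat_part hard_rules J) = card hard_rules}"
    using At stable stable_model_T_prog_iff
    by (simp add: lpmln_SM_def card_sat_part_eq_iff finite_hard_rules)
next
  fix J
  assume "J \<in> {J \<in> lpmln_SM At T. card (sat_part hard_rules J) = card hard_rules}"
  then have At: "J \<subseteq> At" and stable: "stable_model J (snd ` sat_part T J)"
    and hard: "\<forall>(w, R)\<in>hard_rules. rule_sat J R"
    unfolding lpmln_SM_def by (auto simp: card_sat_part_eq_iff finite_hard_rules)
  then show "J \<in> SM2 C PC Dom \<Pi>"
    using sat_hard_rules_iff stable_model_T_prog_iff[OF At hard]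
    by (simp add: SM2_def)
qed

lemma sum_weights_sat_part_T_prog:
  assumes "J \<subseteq> At"
  shows "(\<Sum>(w, R)\<in>sat_part T J. wval \<alpha> w)
    = \<alpha> * card (sat_part hard_rules J) + (\<Sum>(c, v)\<in>TC PC J. ln (M c v))"
proof -
  have hard_Alpha: "fst p = Alpha" if "p \<in> hard_rules" for p
    using that unfolding hard_rules_def certain_facts_def consistency_constraints_def by auto
  have soft_W: "fst p \<noteq> Alpha" if "p \<in> soft_facts" for p
    using that unfolding soft_facts_def by auto
  have finite_TC: "finite (TC PC J)"
    using finite_At assms unfolding TC_def by (auto intro: finite_subset)
  have "(\<Sum>(w, R)\<in>sat_part hard_rules J. wval \<alpha> w) = (\<Sum>p\<in>sat_part hard_rules J. \<alpha>)"
    using hard_Alpha sat_part_subset[of hard_rules J] by (intro sum.cong) fastforce+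
  moreover have "(\<Sum>(w, R)\<in>sat_part soft_facts J. wval \<alpha> w) = (\<Sum>(c, v)\<in>TC PC J. ln (M c v))"
  proof -
    have "inj_on (\<lambda>(c, v). (W (ln (M c v)), fact (c, v))) A" for A
      by (auto simp: inj_on_def fact_def)
    then have "(\<Sum>(w, R)\<in>sat_part soft_facts J. wval \<alpha> w)
        = (\<Sum>(c, v)\<in>{(c, v) \<in> TC PC J. M c v < 1}. ln (M c v))"
      unfolding sat_part_soft_facts[OF assms] by (subst sum.reindex) (auto simp: case_prod_beta)
    also have "\<dots> = (\<Sum>(c, v)\<in>TC PC J. ln (M c v))"
    proof (rule sum.mono_neutral_left[OF finite_TC])
      show "\<forall>x\<in>TC PC J - {(c, v) \<in> TC PC J. M c v < 1}. (case x of (c, v) \<Rightarrow> ln (M c v)) = 0"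
      proof
        fix x assume "x \<in> TC PC J - {(c, v) \<in> TC PC J. M c v < 1}"
        then obtain c v where "x = (c, v)" and "M c v = 1"
          using assms M_le_1 unfolding TC_def sig_atoms_def by (fastforce simp: not_less)
        then show "(case x of (c, v) \<Rightarrow> ln (M c v)) = 0" by simp
      qed
    qed auto
    finally show ?thesis .
  qed
  moreover have "sat_part soft_facts J \<inter> sat_part hard_rules J = {}"
    using hard_Alpha soft_W sat_part_subset by blast
  moreover have "finite (sat_part X J)" if "finite X" for X :: "(weight \<times> ('c \<times> 'v) rule) set"
    using that sat_part_subset by (rule finite_subset[rotated])
  ultimately show ?thesis
    unfolding T_prog_eq sat_part_Un
    by (simp add: sum.union_disjoint finite_soft_facts finite_hard_rules)
qed

lemma lpmln_W_T_prog:
  "lpmln_W At T \<alpha> J = (if J \<in> lpmln_SM At T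
     then exp (\<alpha> * card (sat_part hard_rules J) + (\<Sum>(c, v)\<in>TC PC J. ln (M c v))) else 0)"
  by (simp add: lpmln_W_def lpmln_SM_def sum_weights_sat_part_T_prog)

lemma W2_eq_exp:
  "W2 C PC Dom M \<Pi> J = (if J \<in> SM2 C PC Dom \<Pi> then exp (\<Sum>(c, v)\<in>TC PC J. ln (M c v)) else 0)"
proof (cases "J \<in> SM2 C PC Dom \<Pi>")
  case True
  then have "J \<subseteq> At"
    unfolding SM2_def by blast
  then have "finite (TC PC J)" and "\<forall>(c, v)\<in>TC PC J. 0 < M c v"
    using finite_At positive unfolding TC_def sig_atoms_def by (auto intro: finite_subset)
  then have "exp (\<Sum>(c, v)\<in>TC PC J. ln (M c v)) = (\<Prod>(c, v)\<in>TC PC J. M c v)"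
    by (auto simp: exp_sum case_prod_beta intro: prod.cong)
  then show ?thesis
    using True by (simp add: W2_def)
qed (simp add: W2_def)

lemma tendsto_lpmln_ratio_T_prog:
  assumes "SM2 C PC Dom \<Pi> \<noteq> {}"
  shows "((\<lambda>\<alpha>. lpmln_ratio At T \<alpha> I) \<longlongrightarrow> P2 C PC Dom M \<Pi> I) at_top"
proof -
  define X where "X = lpmln_SM At T"
  define k where "k J = real (card (sat_part hard_rules J))" for J
  define g where "g J = (\<Sum>(c, v)\<in>TC PC J. ln (M c v))" for J
  have SM2: "SM2 C PC Dom \<Pi> = {J \<in> X. k J = card hard_rules}"
    unfolding SM2_eq_max_hard_rules X_def k_def by simp
  have "finite X"
    using finite_At unfolding X_def lpmln_SM_def by (auto intro: finite_subset[of _ "Pow At"])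
  moreover have "\<forall>J\<in>X. k J \<le> card hard_rules"
    unfolding k_def using card_mono[OF finite_hard_rules sat_part_subset] by simp
  moreover have "\<exists>J\<in>X. k J = card hard_rules"
    using assms unfolding SM2 by blast
  ultimately have "((\<lambda>\<alpha>. (if I \<in> X then exp (\<alpha> * k I + g I) else 0) / (\<Sum>J\<in>X. exp (\<alpha> * k J + g J)))
      \<longlongrightarrow> (if I \<in> SM2 C PC Dom \<Pi> then exp (g I) else 0) / (\<Sum>J\<in>SM2 C PC Dom \<Pi>. exp (g J))) at_top"
    unfolding SM2 by (rule tendsto_gibbs_ratio_at_top)
  moreover have "lpmln_ratio At T \<alpha> I
      = (if I \<in> X then exp (\<alpha> * k I + g I) else 0) / (\<Sum>J\<in>X. exp (\<alpha> * k J + g J))" for \<alpha>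
    unfolding lpmln_ratio_def lpmln_W_T_prog X_def k_def g_def by (simp cong: sum.cong)
  moreover have "P2 C PC Dom M \<Pi> I
      = (if I \<in> SM2 C PC Dom \<Pi> then exp (g I) else 0) / (\<Sum>J\<in>SM2 C PC Dom \<Pi>. exp (g J))"
    unfolding P2_def W2_eq_exp g_def by (simp cong: sum.cong)
  ultimately show ?thesis
    by simp
qed

end

theorem proposition4:
  fixes C PC :: "'c set" and Dom :: "'c \<Rightarrow> 'v set" and M :: "'c \<Rightarrow> 'v \<Rightarrow> real"
    and \<Pi> :: "('c \<times> 'v) rule set" and I :: "('c \<times> 'v) set"
  assumes "mv_program C PC Dom M \<Pi>"
    and "\<forall>c \<in> PC. \<forall>v \<in> Dom c. 0 < M c v"
    and "SM2 C PC Dom \<Pi> \<noteq> {}"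
    and "I \<subseteq> sig_atoms C Dom"
  shows "((\<lambda>\<alpha>. lpmln_ratio (sig_atoms C Dom) (T_prog C PC Dom M \<Pi>) \<alpha> I)
            \<longlongrightarrow> P2 C PC Dom M \<Pi> I) at_top
       \<and> P2 C PC Dom M \<Pi> I = lpmln_prob (sig_atoms C Dom) (T_prog C PC Dom M \<Pi>) I"
proof -
  interpret positive_mv_program C PC Dom M \<Pi>
    using assms(1,2) by unfold_locales
  have lim: "((\<lambda>\<alpha>. lpmln_ratio (sig_atoms C Dom) (T_prog C PC Dom M \<Pi>) \<alpha> I)
      \<longlongrightarrow> P2 C PC Dom M \<Pi> I) at_top"
    using tendsto_lpmln_ratio_T_prog[OF assms(3)] .
  moreover have "P2 C PC Dom M \<Pi> I = lpmln_prob (sig_atoms C Dom) (T_prog C PC Dom M \<Pi>) I"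
    unfolding lpmln_prob_def by (rule tendsto_Lim[OF _ lim, symmetric]) simp
  ultimately show ?thesis
    by blast
qed

end
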